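(* Let $0<\nu<1$, let $\chi$ be a kernel with $M_\nu(\chi)<\infty$, and let $f\in\mathcal{C}(\mathbb{R}^+)$. Then for all sufficiently large $w>0$ and every $t\in\mathbb{R}^+$, $$|(S_w^\chi f)(t)-f(t)|\le \omega(f,w^{-\nu})\,[M_\nu(\chi)+2M_0(\chi)]+2^{\nu+1}\|f\|_\infty M_\nu(\chi)\,w^{-\nu}.$$
   Context: Let $\mathbb{R}^+=(0,\infty)$. For $\chi:\mathbb{R}^+\to\mathbb{R}$ and $\nu\ge 0$ set $M_\nu(\chi):=\sup_{u>0}\sum_{k\in\mathbb{Z}}|\chi(e^{-k}u)|\,|k-\log u|^\nu$ (with $|k-\log u|^0:=1$). A kernel is a function $\chi:\mathbb{R}^+\to\mathbb{R}$ such that (K1) $\sum_{k\in\mathbb{Z}}\chi(e^{-k}u)=1$ for every $u\in\mathbb{R}^+$, and (K2) $M_0(\chi)<\infty$ and $M_\nu(\chi)<\infty$ for some $\nu>0$. For a bounded $f:\mathbb{R}^+\to\mathbb{R}$, $w>0$ and $t\in\mathbb{R}^+$, the exponential sampling series is $(S_w^\chi f)(t)=\sum_{k\in\mathbb{Z}}\chi(e^{-k}t^w)\,f(e^{k/w})$. $\|f\|_\infty=\sup_{x>0}|f(x)|$. $\mathcal{C}(\mathbb{R}^+)$ is the space of bounded functions $f:\mathbb{R}^+\to\mathbb{R}$ that are log-uniformly continuous: for every $\epsilon>0$ there is $\delta>0$ with $|f(p)-f(q)|<\epsilon$ whenever $|\log p-\log q|<\delta$. The logarithmic modulus of continuity is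 $\omega(f,\delta):=\sup\{|f(p)-f(q)|: p,q\in\mathbb{R}^+,\ |\log p-\log q|\le\delta\}$ for $\delta>0$. *)

theory Defs
  imports "HOL-Analysis.Analysis"
begin

text \<open>|x|^nu with the convention |x|^0 := 1 (Isabelle's 0 powr 0 = 0).\<close>
definition abspow :: "real \<Rightarrow> real \<Rightarrow> real" where
  "abspow x nu = (if nu = 0 then 1 else \<bar>x\<bar> powr nu)"

text \<open>Absolute moment M_nu(chi), valued in [0,\<infinity>] so that divergence is recorded as \<infinity>.\<close>
definition M_moment :: "real \<Rightarrow> (real \<Rightarrow> real) \<Rightarrow> ennreal" where
  "M_moment nu chi = (SUP u\<in>{0<..}. (\<Sum>\<^sub>\<infinity>k::int. ennreal (\<bar>chi (exp (- real_of_int k) * u)\<bar>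
                         * abspow (real_of_int k - ln u) nu)))"

definition is_kernel :: "(real \<Rightarrow> real) \<Rightarrow> bool" where
  "is_kernel chi \<longleftrightarrow>
     (\<forall>u>0. ((\<lambda>k::int. chi (exp (- real_of_int k) * u)) has_sum 1) UNIV) \<and>
     M_moment 0 chi < \<infinity> \<and> (\<exists>nu>0. M_moment nu chi < \<infinity>)"

definition exp_sampling :: "(real \<Rightarrow> real) \<Rightarrow> real \<Rightarrow> (real \<Rightarrow> real) \<Rightarrow> real \<Rightarrow> real" where
  "exp_sampling chi w f t = (\<Sum>\<^sub>\<infinity>k::int. chi (exp (- real_of_int k) * t powr w) * f (exp (real_of_int k / w)))"

definition sup_norm :: "(real \<Rightarrow> real) \<Rightarrow> real" where
  "sup_norm f = Sup {\<bar>f x\<bar> | x. x > 0}"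

definition log_uc_space :: "(real \<Rightarrow> real) set" where
  "log_uc_space = {f. (\<exists>B. \<forall>x>0. \<bar>f x\<bar> \<le> B) \<and>
     (\<forall>\<epsilon>>0. \<exists>\<delta>>0. \<forall>p>0. \<forall>q>0. \<bar>ln p - ln q\<bar> < \<delta> \<longrightarrow> \<bar>f p - f q\<bar> < \<epsilon>)}"

definition log_modulus :: "(real \<Rightarrow> real) \<Rightarrow> real \<Rightarrow> real" where
  "log_modulus f \<delta> = Sup {\<bar>f p - f q\<bar> | p q. p > 0 \<and> q > 0 \<and> \<bar>ln p - ln q\<bar> \<le> \<delta>}"

end

theory Submission
  imports Defs
begin

text \<open>Let \<open>u = t\<^sup>w\<close>. Since the kernel values \<open>\<chi>(e\<^sup>-\<^sup>k u)\<close> sum to one,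
  \<open>S\<^sub>w f t - f t = \<Sum>\<^sub>k \<chi>(e\<^sup>-\<^sup>k u) (f(e\<^sup>k\<^sup>/\<^sup>w) - f t)\<close>, and the logarithmic distance of the
  two sample points is \<open>s = |k - ln u| / w\<close>. If \<open>s \<le> 1\<close>, covering \<open>s\<close> by \<open>1 + s w\<^sup>\<nu>\<close> steps
  of length \<open>w\<^sup>-\<^sup>\<nu>\<close> and using \<open>s w\<^sup>\<nu> \<le> (w s)\<^sup>\<nu>\<close> bounds the increment by
  \<open>\<omega>(f, w\<^sup>-\<^sup>\<nu>) (1 + |k - ln u|\<^sup>\<nu>)\<close>; if \<open>s > 1\<close>, it is at most
  \<open>2\<parallel>f\<parallel> \<le> 2\<parallel>f\<parallel> w\<^sup>-\<^sup>\<nu> |k - ln u|\<^sup>\<nu>\<close>. Summing against \<open>|\<chi>|\<close> and bounding the two resulting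
  series by the moments \<open>M\<^sub>0\<close> and \<open>M\<^sub>\<nu>\<close> gives the estimate, even with the sharper
  constants \<open>M\<^sub>0 + M\<^sub>\<nu>\<close> and \<open>2\<close>.\<close>

lemma abs_le_sup_norm:
  assumes "\<forall>x>0. \<bar>f x\<bar> \<le> B" "x > 0"
  shows "\<bar>f x\<bar> \<le> sup_norm f"
  unfolding sup_norm_def using assms by (intro cSup_upper bdd_aboveI[of _ B]) auto

lemma sup_norm_nonneg:
  assumes "\<forall>x>0. \<bar>f x\<bar> \<le> B"
  shows "sup_norm f \<ge> 0"
  using abs_le_sup_norm[OF assms zero_less_one] by simp

lemma abs_diff_le_log_modulus:
  assumes "\<forall>x>0. \<bar>f x\<bar> \<le> B" "p > 0" "q > 0" "\<bar>ln p - ln q\<bar> \<le> \<delta>"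
  shows "\<bar>f p - f q\<bar> \<le> log_modulus f \<delta>"
  unfolding log_modulus_def
proof (rule cSup_upper)
  show "bdd_above {\<bar>f p - f q\<bar> |p q. p > 0 \<and> q > 0 \<and> \<bar>ln p - ln q\<bar> \<le> \<delta>}"
  proof (rule bdd_aboveI[of _ "2 * B"], clarify)
    fix p q :: real assume "p > 0" "q > 0"
    then show "\<bar>f p - f q\<bar> \<le> 2 * B" using assms(1) by (smt (verit))
  qed
qed (use assms in auto)

lemma log_modulus_nonneg:
  assumes "\<forall>x>0. \<bar>f x\<bar> \<le> B" "\<delta> \<ge> 0"
  shows "log_modulus f \<delta> \<ge> 0"
  using abs_diff_le_log_modulus[OF assms(1), where p = 1 and q = 1 and \<delta> = \<delta>] assms(2) by simp

lemma abs_diff_le_of_nat_mult_step: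
  fixes g :: "real \<Rightarrow> real"
  assumes step: "\<And>x y. \<bar>x - y\<bar> \<le> \<delta> \<Longrightarrow> \<bar>g x - g y\<bar> \<le> \<omega>"
  shows "\<bar>x - y\<bar> \<le> real n * \<delta> \<Longrightarrow> \<bar>g x - g y\<bar> \<le> real n * \<omega>"
proof (induction n arbitrary: x)
  case 0
  then show ?case by simp
next
  case (Suc n)
  define z where "z = x + (y - x) / (real n + 1)"
  have "\<bar>x - z\<bar> = \<bar>x - y\<bar> / (real n + 1)"
    unfolding z_def by (simp add: abs_divide abs_minus_commute)
  also have "\<dots> \<le> \<delta>" using Suc.prems by (simp add: divide_le_eq algebra_simps)
  finally have "\<bar>g x - g z\<bar> \<le> \<omega>" by (rule step)
  have "z - y = (x - y) * real n / (real n + 1)"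
    unfolding z_def by (simp add: field_simps)
  then have "\<bar>z - y\<bar> = \<bar>x - y\<bar> * real n / (real n + 1)"
    by (simp add: abs_mult abs_divide)
  also have "\<dots> \<le> real n * \<delta>"
    using mult_right_mono[OF Suc.prems, of "real n"] by (simp add: divide_le_eq algebra_simps)
  finally have "\<bar>g z - g y\<bar> \<le> real n * \<omega>" by (rule Suc.IH)
  with \<open>\<bar>g x - g z\<bar> \<le> \<omega>\<close> show ?case by (simp add: algebra_simps)
qed

lemma abs_diff_le_scaled_log_modulus:
  assumes bound: "\<forall>x>0. \<bar>f x\<bar> \<le> B" and "\<delta> > 0" "p > 0" "q > 0"
  shows "\<bar>f p - f q\<bar> \<le> (1 + \<bar>ln p - ln q\<bar> / \<delta>) * log_modulus f \<delta>"
proof -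
  define n where "n = nat \<lceil>\<bar>ln p - ln q\<bar> / \<delta>\<rceil>"
  have n_lower: "\<bar>ln p - ln q\<bar> \<le> real n * \<delta>"
    using \<open>\<delta> > 0\<close> by (simp add: n_def pos_divide_le_eq[symmetric])
  have "real n = of_int \<lceil>\<bar>ln p - ln q\<bar> / \<delta>\<rceil>"
    using \<open>\<delta> > 0\<close> by (simp add: n_def)
  then have n_upper: "real n \<le> 1 + \<bar>ln p - ln q\<bar> / \<delta>"
    using of_int_ceiling_le_add_one[of "\<bar>ln p - ln q\<bar> / \<delta>"] by linarith
  have "\<bar>f (exp (ln p)) - f (exp (ln q))\<bar> \<le> real n * log_modulus f \<delta>"
    by (rule abs_diff_le_of_nat_mult_step[OF _ n_lower])
      (simp add: abs_diff_le_log_modulus[OF bound])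
  also have "\<dots> \<le> (1 + \<bar>ln p - ln q\<bar> / \<delta>) * log_modulus f \<delta>"
    by (intro mult_right_mono n_upper log_modulus_nonneg[OF bound]) (use \<open>\<delta> > 0\<close> in auto)
  finally show ?thesis using assms by simp
qed

lemma abs_diff_le_log_modulus_powr:
  fixes w \<nu> :: real
  assumes bound: "\<forall>x>0. \<bar>f x\<bar> \<le> B"
    and "0 \<le> \<nu>" "\<nu> \<le> 1" "w > 0" "p > 0" "q > 0"
  defines "D \<equiv> \<bar>w * (ln p - ln q)\<bar> powr \<nu>"
  shows "\<bar>f p - f q\<bar> \<le> log_modulus f (w powr - \<nu>) * (1 + D) + 2 * sup_norm f * w powr - \<nu> * D"
proof -
  define s where "s = \<bar>ln p - ln q\<bar>"
  have D_eq: "D = w powr \<nu> * s powr \<nu>"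
    using \<open>w > 0\<close> by (simp add: D_def s_def abs_mult powr_mult)
  have \<omega>_nonneg: "log_modulus f (w powr - \<nu>) \<ge> 0" by (rule log_modulus_nonneg[OF bound]) simp
  have "D \<ge> 0" by (simp add: D_def)
  show ?thesis
  proof (cases "s \<le> 1")
    case True
    have "s \<le> s powr \<nu>"
      using True powr_mono'[of \<nu> 1 s] \<open>\<nu> \<le> 1\<close> by (cases "s = 0") (auto simp: s_def)
    then have "s / w powr - \<nu> \<le> D"
      using \<open>w > 0\<close> by (simp add: D_eq powr_minus_divide mult_left_mono)
    have "\<bar>f p - f q\<bar> \<le> (1 + s / w powr - \<nu>) * log_modulus f (w powr - \<nu>)"
      unfolding s_def using assms by (intro abs_diff_le_scaled_log_modulus[OF bound]) auto
    also have "\<dots> \<le> log_modulus f (w powr - \<nu>) * (1 + D)"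
      using \<open>s / w powr - \<nu> \<le> D\<close> \<omega>_nonneg by (subst mult.commute, intro mult_left_mono) auto
    moreover have "0 \<le> 2 * sup_norm f * w powr - \<nu> * D"
      using sup_norm_nonneg[OF bound] \<open>D \<ge> 0\<close> by simp
    ultimately show ?thesis by linarith
  next
    case False
    have "\<bar>f p - f q\<bar> \<le> 2 * sup_norm f"
      using abs_le_sup_norm[OF bound, of p] abs_le_sup_norm[OF bound, of q] assms by linarith
    also have "\<dots> \<le> 2 * sup_norm f * s powr \<nu>"
      using False \<open>0 \<le> \<nu>\<close> sup_norm_nonneg[OF bound] mult_left_mono[of 1 "s powr \<nu>" "2 * sup_norm f"]
      by (simp add: ge_one_powr_ge_zero)
    also have "\<dots> = 2 * sup_norm f * w powr - \<nu> * D"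
      using \<open>w > 0\<close> by (simp add: D_eq powr_minus_divide)
    finally show ?thesis
      using \<omega>_nonneg \<open>D \<ge> 0\<close> by (simp add: add_increasing)
  qed
qed

lemma nonneg_infsum_le_enn2real:
  fixes h :: "'a \<Rightarrow> real"
  assumes nonneg: "\<And>x. h x \<ge> 0" and le: "(\<Sum>\<^sub>\<infinity>x. ennreal (h x)) \<le> M" and "M < \<infinity>"
  shows "h summable_on UNIV" "infsum h UNIV \<le> enn2real M"
proof -
  have finite_sums: "sum h F \<le> enn2real M" if "finite F" for F
  proof -
    have "ennreal (sum h F) = (\<Sum>\<^sub>\<infinity>x\<in>F. ennreal (h x))"
      using that nonneg by (simp add: sum_ennreal)
    also have "\<dots> \<le> (\<Sum>\<^sub>\<infinity>x. ennreal (h x))"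
      by (rule infsum_mono_neutral) (simp_all add: nonneg_summable_on_complete)
    finally have "ennreal (sum h F) \<le> M" using le by (rule order.trans)
    then have "enn2real (ennreal (sum h F)) \<le> enn2real M" using \<open>M < \<infinity>\<close> by (intro enn2real_mono) auto
    then show ?thesis using nonneg by (simp add: sum_nonneg)
  qed
  show summable: "h summable_on UNIV"
    using nonneg finite_sums by (intro nonneg_bdd_above_summable_on bdd_aboveI2) auto
  show "infsum h UNIV \<le> enn2real M"
    using finite_sums by (intro infsum_le_finite_sums[OF summable]) auto
qed

lemma M_moment_summable:
  assumes "M_moment \<nu> chi < \<infinity>" "u > 0"
  shows "(\<lambda>k::int. \<bar>chi (exp (- real_of_int k) * u)\<bar> * abspow (real_of_int k - ln u) \<nu>) summable_on UNIV"
    and "(\<Sum>\<^sub>\<infinity>k::int. \<bar>chi (exp (- real_of_int k) * u)\<bar> * abspow (real_of_int k - ln u) \<nu>)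
           \<le> enn2real (M_moment \<nu> chi)"
proof -
  have "(\<Sum>\<^sub>\<infinity>k::int. ennreal (\<bar>chi (exp (- real_of_int k) * u)\<bar> * abspow (real_of_int k - ln u) \<nu>))
          \<le> M_moment \<nu> chi"
    unfolding M_moment_def using \<open>u > 0\<close> by (intro SUP_upper) auto
  from nonneg_infsum_le_enn2real[OF _ this \<open>M_moment \<nu> chi < \<infinity>\<close>]
  show "(\<lambda>k::int. \<bar>chi (exp (- real_of_int k) * u)\<bar> * abspow (real_of_int k - ln u) \<nu>) summable_on UNIV"
    and "(\<Sum>\<^sub>\<infinity>k::int. \<bar>chi (exp (- real_of_int k) * u)\<bar> * abspow (real_of_int k - ln u) \<nu>)
           \<le> enn2real (M_moment \<nu> chi)"
    by (simp_all add: abspow_def)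
qed

lemma exp_sampling_minus_has_sum:
  assumes "is_kernel chi" "\<forall>x>0. \<bar>f x\<bar> \<le> B" "t > 0"
  shows "((\<lambda>k::int. chi (exp (- real_of_int k) * t powr w) * (f (exp (real_of_int k / w)) - f t))
           has_sum (exp_sampling chi w f t - f t)) UNIV"
proof -
  define a where "a = (\<lambda>k::int. chi (exp (- real_of_int k) * t powr w))"
  define F where "F = (\<lambda>k::int. f (exp (real_of_int k / w)))"
  have a_sum: "(a has_sum 1) UNIV"
    using \<open>is_kernel chi\<close> \<open>t > 0\<close> unfolding is_kernel_def a_def by simp
  have "M_moment 0 chi < \<infinity>"
    using \<open>is_kernel chi\<close> unfolding is_kernel_def by simp
  from M_moment_summable(1)[OF this, of "t powr w"] \<open>t > 0\<close>
  have "(\<lambda>k. \<bar>a k\<bar>) summable_on UNIV" by (simp add: a_def abspow_def)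
  then have "(\<lambda>k. \<bar>a k\<bar> * B) summable_on UNIV" by (rule summable_on_cmult_left)
  moreover have "norm (a k * F k) \<le> \<bar>a k\<bar> * B" for k
    using assms(2) by (simp add: F_def abs_mult mult_left_mono)
  ultimately have "(\<lambda>k. norm (a k * F k)) summable_on UNIV"
    by (rule Infinite_Sum.abs_summable_on_comparison_test')
  then have "(\<lambda>k. a k * F k) summable_on UNIV"
    by (rule summable_on_iff_abs_summable_on_real[THEN iffD2])
  then have "((\<lambda>k. a k * F k + (- f t) * a k) has_sum (infsum (\<lambda>k. a k * F k) UNIV + (- f t) * 1)) UNIV"
    by (intro has_sum_add has_sum_infsum has_sum_cmult_right a_sum)
  then have "((\<lambda>k. a k * (F k - f t)) has_sum (infsum (\<lambda>k. a k * F k) UNIV - f t)) UNIV"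
    by (simp add: algebra_simps)
  then show ?thesis
    unfolding exp_sampling_def a_def F_def .
qed

lemma abs_exp_sampling_minus_le:
  assumes "is_kernel chi" "M_moment \<nu> chi < \<infinity>" "0 < \<nu>" "\<nu> \<le> 1"
    and bound: "\<forall>x>0. \<bar>f x\<bar> \<le> B" and "w > 0" "t > 0"
  shows "\<bar>exp_sampling chi w f t - f t\<bar>
     \<le> log_modulus f (w powr - \<nu>) * (enn2real (M_moment 0 chi) + enn2real (M_moment \<nu> chi))
       + 2 * sup_norm f * w powr - \<nu> * enn2real (M_moment \<nu> chi)"
proof -
  define u where "u = t powr w"
  define \<omega> where "\<omega> = log_modulus f (w powr - \<nu>)"
  define c where "c = 2 * sup_norm f * w powr - \<nu>"
  define h0 where "h0 = (\<lambda>k::int. \<bar>chi (exp (- real_of_int k) * u)\<bar>)"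
  define h where "h = (\<lambda>k::int. h0 k * \<bar>real_of_int k - ln u\<bar> powr \<nu>)"
  have "u > 0" using \<open>t > 0\<close> by (simp add: u_def)
  have "M_moment 0 chi < \<infinity>" using \<open>is_kernel chi\<close> by (simp add: is_kernel_def)
  from M_moment_summable[OF this \<open>u > 0\<close>] M_moment_summable[OF assms(2) \<open>u > 0\<close>] \<open>\<nu> > 0\<close>
  have h0: "h0 summable_on UNIV" "infsum h0 UNIV \<le> enn2real (M_moment 0 chi)"
    and h: "h summable_on UNIV" "infsum h UNIV \<le> enn2real (M_moment \<nu> chi)"
    by (simp_all add: h0_def h_def abspow_def)
  have "\<bar>exp_sampling chi w f t - f t\<bar> \<le> \<omega> * (infsum h0 UNIV + infsum h UNIV) + c * infsum h UNIV"
  proof (rule norm_infsum_le[OF exp_sampling_minus_has_sum[OF assms(1) bound \<open>t > 0\<close>],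
        unfolded real_norm_def])
    show "((\<lambda>k. \<omega> * (h0 k + h k) + c * h k) has_sum
            \<omega> * (infsum h0 UNIV + infsum h UNIV) + c * infsum h UNIV) UNIV"
      by (intro has_sum_add has_sum_cmult_right has_sum_infsum h0 h)
  next
    fix k :: int
    have "w * (ln (exp (real_of_int k / w)) - ln t) = real_of_int k - ln u"
      using \<open>w > 0\<close> \<open>t > 0\<close> by (simp add: u_def ln_powr field_simps)
    then have increment: "\<bar>f (exp (real_of_int k / w)) - f t\<bar> \<le> \<omega> * (1 + \<bar>real_of_int k - ln u\<bar> powr \<nu>)
                 + c * \<bar>real_of_int k - ln u\<bar> powr \<nu>"
      using abs_diff_le_log_modulus_powr[OF bound, of \<nu> w "exp (real_of_int k / w)" t] assms
      by (simp add: \<omega>_def c_def)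
    have "\<bar>chi (exp (- real_of_int k) * t powr w) * (f (exp (real_of_int k / w)) - f t)\<bar>
            = h0 k * \<bar>f (exp (real_of_int k / w)) - f t\<bar>"
      by (simp add: h0_def u_def abs_mult)
    also have "\<dots> \<le> h0 k * (\<omega> * (1 + \<bar>real_of_int k - ln u\<bar> powr \<nu>) + c * \<bar>real_of_int k - ln u\<bar> powr \<nu>)"
      using increment by (rule mult_left_mono) (simp add: h0_def)
    also have "\<dots> = \<omega> * (h0 k + h k) + c * h k"
      by (simp add: h_def algebra_simps)
    finally show "\<bar>chi (exp (- real_of_int k) * t powr w) * (f (exp (real_of_int k / w)) - f t)\<bar>
            \<le> \<omega> * (h0 k + h k) + c * h k" .
  qed
  also have "\<dots> \<le> \<omega> * (enn2real (M_moment 0 chi) + enn2real (M_moment \<nu> chi)) + c * enn2real (M_moment \<nu> chi)"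
    using h0 h log_modulus_nonneg[where \<delta> = "w powr - \<nu>", OF bound] sup_norm_nonneg[OF bound]
    by (intro add_mono mult_left_mono) (auto simp: \<omega>_def c_def)
  finally show ?thesis by (simp add: \<omega>_def c_def)
qed

theorem theorem8:
  fixes chi f :: "real \<Rightarrow> real" and nu :: real
  assumes "0 < nu" "nu < 1"
    and "is_kernel chi"
    and "M_moment nu chi < \<infinity>"
    and "f \<in> log_uc_space"
  shows "\<forall>\<^sub>F w in at_top. \<forall>t>0.
     \<bar>exp_sampling chi w f t - f t\<bar>
       \<le> log_modulus f (w powr (- nu)) * (enn2real (M_moment nu chi) + 2 * enn2real (M_moment 0 chi))
         + 2 powr (nu + 1) * sup_norm f * enn2real (M_moment nu chi) * w powr (- nu)"
proof (rule eventually_mono[OF eventually_gt_at_top[of 0]], intro allI impI)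
  fix w t :: real
  assume "w > 0" "t > 0"
  obtain B where bound: "\<forall>x>0. \<bar>f x\<bar> \<le> B"
    using \<open>f \<in> log_uc_space\<close> unfolding log_uc_space_def by auto
  define \<omega> M0 M where "\<omega> = log_modulus f (w powr - nu)"
    and "M0 = enn2real (M_moment 0 chi)" and "M = enn2real (M_moment nu chi)"
  have "\<bar>exp_sampling chi w f t - f t\<bar> \<le> \<omega> * (M0 + M) + 2 * sup_norm f * w powr - nu * M"
    unfolding \<omega>_def M0_def M_def using assms \<open>w > 0\<close> \<open>t > 0\<close>
    by (intro abs_exp_sampling_minus_le[OF _ _ _ _ bound]) auto
  moreover have "\<omega> * (M0 + M) \<le> \<omega> * (M + 2 * M0)"
    unfolding \<omega>_def M0_def using log_modulus_nonneg[OF bound] by (intro mult_left_mono) auto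
  moreover have "2 * sup_norm f * w powr - nu * M \<le> 2 powr (nu + 1) * sup_norm f * M * w powr - nu"
  proof -
    have "2 * (sup_norm f * M * w powr - nu) \<le> 2 powr (nu + 1) * (sup_norm f * M * w powr - nu)"
      using powr_mono[of 1 "nu + 1" 2] \<open>0 < nu\<close> sup_norm_nonneg[OF bound]
      by (intro mult_right_mono) (auto simp: M_def)
    then show ?thesis by (simp add: ac_simps)
  qed
  ultimately show "\<bar>exp_sampling chi w f t - f t\<bar> \<le> \<omega> * (M + 2 * M0)
      + 2 powr (nu + 1) * sup_norm f * M * w powr (- nu)"
    by linarith
qed

end
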